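(* Let $n\ge 2$, $\rho>0$, $\varepsilon\in[0,1]$, and let $F_1,\dots,F_n$ be continuous distributions on $\mathbb{R}$, each with a monotone density. For any joint distribution of channel gains $(|h_1|^2,\dots,|h_n|^2)$ with $|h_i|^2\sim F_i$ for each $i$, the $\varepsilon$-outage capacity $R^{\varepsilon}$ satisfies $$\log_2\bigl(1-\rho\,\Phi_{-}(1-\varepsilon)\bigr)\le R^{\varepsilon}\le\log_2\bigl(1+\rho\,\Phi(\varepsilon)\bigr).$$
   Context: $R^{\varepsilon}=\sup\{R\ge0:\Pr(\sum_{i=1}^n|h_i|^2<(2^R-1)/\rho)<\varepsilon\}$. With $G_i=F_i^{-1}$ and $X_i\sim F_i$, define $\Phi(a)=\sum_{i=1}^n\mathbb{E}[X_i\mid X_i\ge G_i(a)]$. The function $\Phi_{-}$ is $\Phi$ computed for the random variables $-X_i$, i.e. $\Phi_{-}(a)=\sum_{i=1}^n\mathbb{E}[-X_i\mid -X_i\ge G_{i,-}(a)]$ where $G_{i,-}(x)=-G_i(1-x)$ is the quantile function of $-X_i$. *)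

theory Defs
  imports "HOL-Probability.Probability"
begin

text \<open>A continuous distribution on the reals: a probability measure on the Borel sets
  without atoms (equivalently, with a continuous cdf).\<close>
definition continuous_distribution :: "real measure \<Rightarrow> bool" where
  "continuous_distribution \<mu> \<longleftrightarrow>
     prob_space \<mu> \<and> sets \<mu> = sets borel \<and> (\<forall>x. measure \<mu> {x} = 0)"

definition has_monotone_density :: "real measure \<Rightarrow> bool" where
  "has_monotone_density \<mu> \<longleftrightarrow>
     (\<exists>f I. f \<in> borel_measurable borel \<and> (\<forall>x. 0 \<le> f x) \<and>
            \<mu> = density lborel (\<lambda>x. ennreal (f x)) \<and>
            is_interval I \<and> (\<forall>x. x \<notin> I \<longrightarrow> f x = 0) \<and>
            (mono_on I f \<or> antimono_on I f))"

definition quantile :: "real measure \<Rightarrow> real \<Rightarrow> real" where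
  "quantile \<mu> a = Inf {x. a \<le> cdf \<mu> x}"

text \<open>E[X | X \<ge> g] for X distributed according to \<mu>, as the elementary conditional
  expectation E[X 1{X \<ge> g}] / P(X \<ge> g), with the expectation taken in the extended reals
  (so that it may be +\<infinity>).\<close>
definition cond_exp_ge :: "real measure \<Rightarrow> real \<Rightarrow> ereal" where
  "cond_exp_ge \<mu> g =
     (enn2ereal (\<integral>\<^sup>+x. ennreal x * indicator {g..} x \<partial>\<mu>)
      - enn2ereal (\<integral>\<^sup>+x. ennreal (- x) * indicator {g..} x \<partial>\<mu>))
     / ereal (measure \<mu> {g..})"

definition Phi :: "nat \<Rightarrow> (nat \<Rightarrow> real measure) \<Rightarrow> (nat \<Rightarrow> real \<Rightarrow> real) \<Rightarrow> real \<Rightarrow> ereal" where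
  "Phi n F G a = (\<Sum>i<n. cond_exp_ge (F i) (G i a))"

text \<open>\<Phi>_-(a) = \<Sum>_i E[-X_i | -X_i \<ge> G_{i,-}(a)] with G_{i,-}(x) = - G_i(1 - x);
  -X_i has distribution distr F_i borel uminus.\<close>
definition Phi_minus :: "nat \<Rightarrow> (nat \<Rightarrow> real measure) \<Rightarrow> real \<Rightarrow> ereal" where
  "Phi_minus n F a =
     Phi n (\<lambda>i. distr (F i) borel uminus) (\<lambda>i x. - quantile (F i) (1 - x)) a"

definition outage_capacity ::
  "'a measure \<Rightarrow> (nat \<Rightarrow> 'a \<Rightarrow> complex) \<Rightarrow> nat \<Rightarrow> real \<Rightarrow> real \<Rightarrow> real" where
  "outage_capacity M h n \<rho> \<epsilon> =
     Sup {R. 0 \<le> R \<and>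
        measure M {\<omega> \<in> space M. (\<Sum>i<n. (cmod (h i \<omega>))\<^sup>2) < (2 powr R - 1) / \<rho>} < \<epsilon>}"

fun elog2 :: "ereal \<Rightarrow> ereal" where
  "elog2 (ereal x) = ereal (log 2 x)"
| "elog2 PInfty = PInfty"
| "elog2 MInfty = MInfty"

end

theory Submission
  imports Defs
begin

text \<open>
  Write \<open>X\<^sub>i = |h\<^sub>i|\<^sup>2\<close>, \<open>S = \<Sum>\<^sub>i X\<^sub>i\<close> and \<open>g\<^sub>i = G\<^sub>i(\<epsilon>)\<close>; by continuity of \<open>F\<^sub>i\<close>,
  \<open>P(X\<^sub>i \<le> g\<^sub>i) = \<epsilon>\<close> and \<open>P(X\<^sub>i \<ge> g\<^sub>i) = 1 - \<epsilon>\<close>. A rate \<open>R \<ge> 0\<close> is admissible iff its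
  threshold \<open>t = (2\<^sup>R - 1)/\<rho>\<close> satisfies \<open>P(S < t) < \<epsilon>\<close>.

  Everything rests on a bathtub principle: if \<open>P(B) \<ge> P(X \<ge> g)\<close> then
  \<open>E[X 1\<^sub>B] \<le> P(B) E[X | X \<ge> g]\<close>, because \<open>(X - g)(1\<^sub>B - 1\<^bsub>X \<ge> g\<^esub>) \<le> 0\<close> pointwise.
  If \<open>P(S < t) < \<epsilon>\<close>, the event \<open>B = {S \<ge> t}\<close> has probability \<open>> 1 - \<epsilon>\<close>, so
  \<open>t P(B) \<le> \<Sum>\<^sub>i E[X\<^sub>i 1\<^sub>B] \<le> P(B) \<Phi>(\<epsilon>)\<close>, i.e. \<open>R \<le> log\<^sub>2(1 + \<rho> \<Phi>(\<epsilon>))\<close>. If instead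
  \<open>P(S < t) \<ge> \<epsilon>\<close>, the principle applied to \<open>-X\<^sub>i\<close> on \<open>B = {S < t}\<close> gives
  \<open>t \<ge> -\<Phi>\<^sub>-(1 - \<epsilon>)\<close>; hence every rate below \<open>log\<^sub>2(1 - \<rho> \<Phi>\<^sub>-(1 - \<epsilon>))\<close> is admissible.
\<close>

lemma (in real_distribution) cdf_quantile:
  assumes "\<And>x. measure M {x} = 0" and "0 < e" "e < 1"
  shows "cdf M (quantile M e) = e"
proof -
  define S where "S = {x. e \<le> cdf M x}"
  have cont: "continuous_on UNIV (cdf M)"
    using assms(1) isCont_cdf by (simp add: continuous_on_eq_continuous_at)
  have "\<forall>\<^sub>F x in at_top. e < cdf M x"
    using cdf_lim_at_top_prob \<open>e < 1\<close> by (rule order_tendstoD)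
  then obtain x1 where "e < cdf M x1" by (auto simp: eventually_at_top_linorder)
  then have "S \<noteq> {}" by (auto simp: S_def intro!: exI[of _ x1])
  have "\<forall>\<^sub>F x in at_bot. cdf M x < e"
    using cdf_lim_at_bot \<open>0 < e\<close> by (rule order_tendstoD)
  then obtain x0 where "\<And>x. x \<le> x0 \<Longrightarrow> cdf M x < e" by (auto simp: eventually_at_bot_linorder)
  then have "bdd_below S" by (force simp: S_def bdd_below_def not_le intro: less_imp_le)
  have "closed S" unfolding S_def using cont by (intro closed_Collect_le continuous_intros) auto
  then have "Inf S \<in> S" using \<open>S \<noteq> {}\<close> \<open>bdd_below S\<close> by (simp add: closed_contains_Inf)
  moreover have "cdf M (Inf S) \<le> e"
  proof (rule tendsto_upperbound)
    show "(cdf M \<longlongrightarrow> cdf M (Inf S)) (at_left (Inf S))"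
      using cont by (simp add: continuous_on_def filterlim_at_split)
    show "\<forall>\<^sub>F y in at_left (Inf S). cdf M y \<le> e"
    proof -
      have "y \<notin> S" if "y < Inf S" for y
        using cInf_lower[OF _ \<open>bdd_below S\<close>, of y] that by force
      then show ?thesis
        by (auto simp: eventually_at_left_field S_def not_le intro!: exI[of _ "Inf S - 1"] less_imp_le)
    qed
  qed simp
  ultimately show ?thesis by (simp add: S_def quantile_def)
qed

lemma (in prob_space) prob_quantile_tails:
  fixes X :: "'a \<Rightarrow> real"
  assumes X: "X \<in> borel_measurable M" and cont: "continuous_distribution (distr M borel X)"
    and "0 < e" "e < 1"
  defines "q \<equiv> quantile (distr M borel X) e"
  shows "prob {\<omega>\<in>space M. X \<omega> \<le> q} = e" and "prob {\<omega>\<in>space M. q \<le> X \<omega>} = 1 - e"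
proof -
  let ?D = "distr M borel X"
  interpret D: real_distribution ?D using X by simp
  have prob_distr: "prob {\<omega>\<in>space M. X \<omega> \<in> A} = measure ?D A" if "A \<in> sets borel" for A
    using X that by (subst measure_distr) (auto simp: vimage_def Int_def conj_commute)
  have "measure ?D {..q} = e"
    using D.cdf_quantile[OF _ \<open>0 < e\<close> \<open>e < 1\<close>] cont
    by (simp add: q_def cdf_def continuous_distribution_def)
  then show "prob {\<omega>\<in>space M. X \<omega> \<le> q} = e" using prob_distr[of "{..q}"] by simp
  have "measure ?D {..q} = measure ?D {..<q} + measure ?D {q}"
    by (subst D.finite_measure_Union[symmetric]) (auto intro!: arg_cong[where f = "measure ?D"])
  moreover have "measure ?D {q..} = 1 - measure ?D {..<q}"
    by (subst D.prob_compl[symmetric]) (auto intro!: arg_cong[where f = "measure ?D"])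
  ultimately have "measure ?D {q..} = 1 - e"
    using cont \<open>measure ?D {..q} = e\<close> by (simp add: continuous_distribution_def)
  then show "prob {\<omega>\<in>space M. q \<le> X \<omega>} = 1 - e" using prob_distr[of "{q..}"] by simp
qed

lemma cond_exp_ge_distr:
  fixes Y :: "'a \<Rightarrow> real"
  assumes "Y \<in> borel_measurable M"
  shows "cond_exp_ge (distr M borel Y) c =
    (enn2ereal (\<integral>\<^sup>+\<omega>. ennreal (Y \<omega> * indicator {c..} (Y \<omega>)) \<partial>M)
     - enn2ereal (\<integral>\<^sup>+\<omega>. ennreal (- (Y \<omega> * indicator {c..} (Y \<omega>))) \<partial>M))
    / ereal (measure M {\<omega>\<in>space M. c \<le> Y \<omega>})"
proof -
  have "measure (distr M borel Y) {c..} = measure M {\<omega>\<in>space M. c \<le> Y \<omega>}"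
    using assms by (subst measure_distr) (auto intro!: arg_cong[where f = "measure M"])
  moreover have "ennreal x * indicator {c..} y = ennreal (x * indicator {c..} y)" for x y :: real
    by (simp add: indicator_def)
  ultimately show ?thesis
    unfolding cond_exp_ge_def using assms by (simp add: nn_integral_distr)
qed

lemma (in prob_space) cond_exp_ge_distr_integrable:
  fixes Y :: "'a \<Rightarrow> real"
  assumes "Y \<in> borel_measurable M" and "integrable M (\<lambda>\<omega>. Y \<omega> * indicator {c..} (Y \<omega>))"
    and "0 < prob {\<omega>\<in>space M. c \<le> Y \<omega>}"
  shows "cond_exp_ge (distr M borel Y) c =
    ereal ((\<integral>\<omega>. Y \<omega> * indicator {c..} (Y \<omega>) \<partial>M) / prob {\<omega>\<in>space M. c \<le> Y \<omega>})"
proof -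
  have "enn2ereal N = ereal (enn2real N)" if "N \<noteq> \<top>" for N :: ennreal
    using that by (cases N rule: ennreal_cases) simp_all
  then show ?thesis
    using assms integrableD(2,3)[OF assms(2)]
    by (simp add: cond_exp_ge_distr real_lebesgue_integral_def)
qed

lemma (in prob_space) cond_exp_ge_distr_not_integrable:
  fixes Y :: "'a \<Rightarrow> real"
  assumes "Y \<in> borel_measurable M" and "\<And>\<omega>. \<omega> \<in> space M \<Longrightarrow> 0 \<le> Y \<omega>"
    and "\<not> integrable M (\<lambda>\<omega>. Y \<omega> * indicator {c..} (Y \<omega>))"
  shows "cond_exp_ge (distr M borel Y) c = \<infinity>"
proof -
  have "(\<integral>\<^sup>+\<omega>. ennreal (Y \<omega> * indicator {c..} (Y \<omega>)) \<partial>M) = \<infinity>"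
  proof (rule ccontr)
    assume "(\<integral>\<^sup>+\<omega>. ennreal (Y \<omega> * indicator {c..} (Y \<omega>)) \<partial>M) \<noteq> \<infinity>"
    then have "integrable M (\<lambda>\<omega>. Y \<omega> * indicator {c..} (Y \<omega>))"
      using assms(1,2) by (intro integrableI_nonneg) (auto simp: less_top[symmetric])
    with assms(3) show False ..
  qed
  moreover have "ennreal (- (Y \<omega> * indicator {c..} (Y \<omega>))) = 0" if "\<omega> \<in> space M" for \<omega>
    using assms(2)[OF that] by (simp add: ennreal_eq_0_iff)
  ultimately show ?thesis
    by (simp add: cond_exp_ge_distr[OF assms(1)] nn_integral_cong[where v = "\<lambda>_. 0"])
qed

lemma cond_exp_ge_distr_nonpos:
  fixes Y :: "'a \<Rightarrow> real"
  assumes "Y \<in> borel_measurable M" and "\<And>\<omega>. \<omega> \<in> space M \<Longrightarrow> Y \<omega> \<le> 0"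
  shows "cond_exp_ge (distr M borel Y) c \<le> 0"
proof -
  have "ennreal (Y \<omega> * indicator {c..} (Y \<omega>)) = 0" if "\<omega> \<in> space M" for \<omega>
    using assms(2)[OF that] by (simp add: ennreal_eq_0_iff indicator_def)
  then have "(\<integral>\<^sup>+\<omega>. ennreal (Y \<omega> * indicator {c..} (Y \<omega>)) \<partial>M) = 0"
    by (simp add: nn_integral_cong[where v = "\<lambda>_. 0"])
  then show ?thesis
    by (simp add: cond_exp_ge_distr[OF assms(1)] zero_ennreal.rep_eq minus_ereal_def)
qed

lemma (in prob_space) integral_indicator_le_upper_tail_mean:
  fixes X :: "'a \<Rightarrow> real"
  assumes X: "X \<in> borel_measurable M" and B: "B \<in> events"
    and int_B: "integrable M (\<lambda>\<omega>. X \<omega> * indicator B \<omega>)"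
    and int_tail: "integrable M (\<lambda>\<omega>. X \<omega> * indicator {c..} (X \<omega>))"
    and pos: "0 < prob {\<omega>\<in>space M. c \<le> X \<omega>}" and le: "prob {\<omega>\<in>space M. c \<le> X \<omega>} \<le> prob B"
  shows "(\<integral>\<omega>. X \<omega> * indicator B \<omega> \<partial>M)
    \<le> prob B * ((\<integral>\<omega>. X \<omega> * indicator {c..} (X \<omega>) \<partial>M) / prob {\<omega>\<in>space M. c \<le> X \<omega>})"
proof -
  define P where "P = {\<omega>\<in>space M. c \<le> X \<omega>}"
  define I where "I = (\<integral>\<omega>. X \<omega> * indicator {c..} (X \<omega>) \<partial>M)"
  have P: "P \<in> events" unfolding P_def using X by measurable
  have int_ind: "integrable M (\<lambda>\<omega>. c * indicator A \<omega>)" if "A \<in> events" for A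
    using that by (simp add: emeasure_eq_measure)
  have tail_eq: "X \<omega> * indicator {c..} (X \<omega>) = X \<omega> * indicator P \<omega>" if "\<omega> \<in> space M" for \<omega>
    using that by (simp add: P_def indicator_def)
  \<comment> \<open>Pointwise \<open>(X - c) (1\<^sub>B - 1\<^sub>P) \<le> 0\<close>: off P we have \<open>X < c\<close>, on P we have \<open>X \<ge> c\<close>.\<close>
  have "(\<integral>\<omega>. X \<omega> * indicator B \<omega> \<partial>M)
      \<le> (\<integral>\<omega>. X \<omega> * indicator {c..} (X \<omega>) + (c * indicator B \<omega> - c * indicator P \<omega>) \<partial>M)"
    using int_B int_tail int_ind[OF B] int_ind[OF P]
    by (intro integral_mono) (auto simp: P_def indicator_def)
  also have "\<dots> = I + c * (prob B - prob P)"
    using int_tail int_ind[OF B] int_ind[OF P] B P by (simp add: I_def algebra_simps)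
  finally have shift: "(\<integral>\<omega>. X \<omega> * indicator B \<omega> \<partial>M) \<le> I + c * (prob B - prob P)" .
  have "c * prob P = (\<integral>\<omega>. c * indicator P \<omega> \<partial>M)" using P by simp
  also have "\<dots> \<le> I"
    unfolding I_def using int_ind[OF P] int_tail tail_eq
    by (intro integral_mono) (auto simp: P_def indicator_def)
  finally have "c \<le> I / prob P" using pos by (simp add: P_def field_simps)
  then have "c * (prob B - prob P) \<le> I / prob P * (prob B - prob P)"
    using le by (intro mult_right_mono) (auto simp: P_def)
  with shift have "(\<integral>\<omega>. X \<omega> * indicator B \<omega> \<partial>M) \<le> I + I / prob P * (prob B - prob P)"
    by linarith
  also have "\<dots> = prob B * (I / prob P)" using pos by (simp add: P_def field_simps)
  finally show ?thesis by (simp add: I_def P_def)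
qed

lemma (in prob_space) le_sum_cond_exp_ge:
  fixes X :: "'i \<Rightarrow> 'a \<Rightarrow> real"
  assumes "finite I" and B: "B \<in> events" "0 < prob B"
    and sum_ge: "\<And>\<omega>. \<omega> \<in> B \<Longrightarrow> t \<le> (\<Sum>i\<in>I. X i \<omega>)"
    and X: "\<And>i. i \<in> I \<Longrightarrow> X i \<in> borel_measurable M"
    and int_B: "\<And>i. i \<in> I \<Longrightarrow> integrable M (\<lambda>\<omega>. X i \<omega> * indicator B \<omega>)"
    and int_tail: "\<And>i. i \<in> I \<Longrightarrow> integrable M (\<lambda>\<omega>. X i \<omega> * indicator {c i..} (X i \<omega>))"
    and pos: "\<And>i. i \<in> I \<Longrightarrow> 0 < prob {\<omega>\<in>space M. c i \<le> X i \<omega>}"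
    and le: "\<And>i. i \<in> I \<Longrightarrow> prob {\<omega>\<in>space M. c i \<le> X i \<omega>} \<le> prob B"
  shows "ereal t \<le> (\<Sum>i\<in>I. cond_exp_ge (distr M borel (X i)) (c i))"
proof -
  define m where "m i = (\<integral>\<omega>. X i \<omega> * indicator {c i..} (X i \<omega>) \<partial>M) / prob {\<omega>\<in>space M. c i \<le> X i \<omega>}" for i
  have "t * prob B = (\<integral>\<omega>. t * indicator B \<omega> \<partial>M)" using B by simp
  also have "\<dots> \<le> (\<integral>\<omega>. (\<Sum>i\<in>I. X i \<omega> * indicator B \<omega>) \<partial>M)"
  proof (rule integral_mono)
    show "integrable M (\<lambda>\<omega>. t * indicator B \<omega>)" using B by (simp add: emeasure_eq_measure)
    show "integrable M (\<lambda>\<omega>. \<Sum>i\<in>I. X i \<omega> * indicator B \<omega>)"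
      using int_B by (rule Bochner_Integration.integrable_sum)
    show "t * indicator B \<omega> \<le> (\<Sum>i\<in>I. X i \<omega> * indicator B \<omega>)" for \<omega>
      using sum_ge[of \<omega>] by (simp add: indicator_def)
  qed
  also have "\<dots> = (\<Sum>i\<in>I. \<integral>\<omega>. X i \<omega> * indicator B \<omega> \<partial>M)"
    using int_B by (rule Bochner_Integration.integral_sum)
  also have "\<dots> \<le> (\<Sum>i\<in>I. prob B * m i)"
    unfolding m_def using X B int_B int_tail pos le
    by (intro sum_mono integral_indicator_le_upper_tail_mean) auto
  also have "\<dots> = (\<Sum>i\<in>I. m i) * prob B" by (simp add: sum_distrib_right mult.commute)
  finally have "t \<le> (\<Sum>i\<in>I. m i)" using \<open>0 < prob B\<close> by (rule mult_right_le_imp_le)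
  also have "(\<Sum>i\<in>I. m i) = (\<Sum>i\<in>I. cond_exp_ge (distr M borel (X i)) (c i))"
    unfolding m_def using X int_tail pos by (simp add: cond_exp_ge_distr_integrable)
  finally show ?thesis by simp
qed

lemma (in prob_space) le_sum_cond_exp_ge_nonneg:
  fixes X :: "'i \<Rightarrow> 'a \<Rightarrow> real"
  assumes "finite I" "I \<noteq> {}"
    and X: "\<And>i. i \<in> I \<Longrightarrow> X i \<in> borel_measurable M"
    and nonneg: "\<And>i \<omega>. i \<in> I \<Longrightarrow> \<omega> \<in> space M \<Longrightarrow> 0 \<le> X i \<omega>"
    and pos: "\<And>i. i \<in> I \<Longrightarrow> 0 < prob {\<omega>\<in>space M. c i \<le> X i \<omega>}"
    and le: "\<And>i. i \<in> I \<Longrightarrow>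
      prob {\<omega>\<in>space M. c i \<le> X i \<omega>} \<le> prob {\<omega>\<in>space M. t \<le> (\<Sum>i\<in>I. X i \<omega>)}"
  shows "ereal t \<le> (\<Sum>i\<in>I. cond_exp_ge (distr M borel (X i)) (c i))"
proof (cases "\<forall>i\<in>I. integrable M (\<lambda>\<omega>. X i \<omega> * indicator {c i..} (X i \<omega>))")
  case True
  define B where "B = {\<omega>\<in>space M. t \<le> (\<Sum>i\<in>I. X i \<omega>)}"
  have "(\<lambda>\<omega>. \<Sum>i\<in>I. X i \<omega>) \<in> borel_measurable M" using X by (rule borel_measurable_sum)
  then have B: "B \<in> events" unfolding B_def by measurable
  obtain i where "i \<in> I" using \<open>I \<noteq> {}\<close> by blast
  with pos le have "0 < prob B" unfolding B_def by (meson less_le_trans)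
  have "integrable M (\<lambda>\<omega>. X i \<omega> * indicator B \<omega>)" if "i \<in> I" for i
  proof (rule Bochner_Integration.integrable_bound)
    show "integrable M (\<lambda>\<omega>. X i \<omega> * indicator {c i..} (X i \<omega>) + \<bar>c i\<bar>)"
      using True that by simp
    show "(\<lambda>\<omega>. X i \<omega> * indicator B \<omega>) \<in> borel_measurable M" using X[OF that] B by measurable
    show "AE \<omega> in M. norm (X i \<omega> * indicator B \<omega>) \<le> norm (X i \<omega> * indicator {c i..} (X i \<omega>) + \<bar>c i\<bar>)"
      using nonneg[OF that] by (intro AE_I2) (auto simp: indicator_def)
  qed
  with le_sum_cond_exp_ge[OF \<open>finite I\<close> B \<open>0 < prob B\<close>] X True pos le show ?thesis
    by (auto simp: B_def)
next
  case False
  then obtain j where "j \<in> I" "\<not> integrable M (\<lambda>\<omega>. X j \<omega> * indicator {c j..} (X j \<omega>))" by blast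
  then have "cond_exp_ge (distr M borel (X j)) (c j) = \<infinity>"
    using X nonneg by (intro cond_exp_ge_distr_not_integrable) auto
  with \<open>j \<in> I\<close> \<open>finite I\<close> show ?thesis by (simp add: sum_Pinfty[THEN iffD2] bexI[of _ j])
qed

lemma (in prob_space) le_sum_cond_exp_ge_uminus:
  fixes X :: "'i \<Rightarrow> 'a \<Rightarrow> real"
  assumes "finite I" "I \<noteq> {}"
    and X: "\<And>i. i \<in> I \<Longrightarrow> X i \<in> borel_measurable M"
    and nonneg: "\<And>i \<omega>. i \<in> I \<Longrightarrow> \<omega> \<in> space M \<Longrightarrow> 0 \<le> X i \<omega>"
    and pos: "\<And>i. i \<in> I \<Longrightarrow> 0 < prob {\<omega>\<in>space M. X i \<omega> \<le> c i}"
    and le: "\<And>i. i \<in> I \<Longrightarrow>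
      prob {\<omega>\<in>space M. X i \<omega> \<le> c i} \<le> prob {\<omega>\<in>space M. (\<Sum>i\<in>I. X i \<omega>) < t}"
  shows "ereal (- t) \<le> (\<Sum>i\<in>I. cond_exp_ge (distr M borel (\<lambda>\<omega>. - X i \<omega>)) (- c i))"
proof -
  define B where "B = {\<omega>\<in>space M. (\<Sum>i\<in>I. X i \<omega>) < t}"
  have "(\<lambda>\<omega>. \<Sum>i\<in>I. X i \<omega>) \<in> borel_measurable M" using X by (rule borel_measurable_sum)
  then have B: "B \<in> events" unfolding B_def by measurable
  obtain i where "i \<in> I" using \<open>I \<noteq> {}\<close> by blast
  with pos le have "0 < prob B" unfolding B_def by (meson less_le_trans)
  \<comment> \<open>Nonnegativity bounds both integrands: by \<open>t\<close> on B and by \<open>c i\<close> on the lower tail.\<close>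
  have summand_le: "X i \<omega> \<le> (\<Sum>i\<in>I. X i \<omega>)" if "i \<in> I" "\<omega> \<in> space M" for i \<omega>
    using that nonneg \<open>finite I\<close> by (intro member_le_sum) auto
  have "integrable M (\<lambda>\<omega>. - X i \<omega> * indicator B \<omega>)" if "i \<in> I" for i
  proof (rule integrable_const_bound[where B = "\<bar>t\<bar>"])
    show "(\<lambda>\<omega>. - X i \<omega> * indicator B \<omega>) \<in> borel_measurable M" using X[OF that] B by measurable
    show "AE \<omega> in M. norm (- X i \<omega> * indicator B \<omega>) \<le> \<bar>t\<bar>"
      using nonneg[OF that] summand_le[OF that] by (intro AE_I2) (fastforce simp: B_def indicator_def)
  qed
  moreover have "integrable M (\<lambda>\<omega>. - X i \<omega> * indicator {- c i..} (- X i \<omega>))" if "i \<in> I" for i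
    using X[OF that] nonneg[OF that]
    by (intro integrable_const_bound[where B = "\<bar>c i\<bar>"] AE_I2) (auto simp: indicator_def)
  ultimately show ?thesis
    using le_sum_cond_exp_ge[OF \<open>finite I\<close> B \<open>0 < prob B\<close>, of "- t" "\<lambda>i \<omega>. - X i \<omega>" "\<lambda>i. - c i"]
      X pos le by (auto simp: B_def sum_negf)
qed

lemma (in prob_space) ex_prob_less_ge:
  fixes S :: "'a \<Rightarrow> real"
  assumes "S \<in> borel_measurable M" and "e < 1"
  shows "\<exists>t. e \<le> prob {\<omega>\<in>space M. S \<omega> < t}"
proof -
  interpret D: real_distribution "distr M borel S" using assms(1) by simp
  have "\<forall>\<^sub>F t in at_top. e < cdf (distr M borel S) t"
    using D.cdf_lim_at_top_prob \<open>e < 1\<close> by (rule order_tendstoD)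
  then obtain t where "e < cdf (distr M borel S) t" by (auto simp: eventually_at_top_linorder)
  also have "cdf (distr M borel S) t = prob {\<omega>\<in>space M. S \<omega> \<le> t}"
    using assms(1) by (simp add: cdf_def measure_distr vimage_def Int_def conj_commute)
  also have "\<dots> \<le> prob {\<omega>\<in>space M. S \<omega> < t + 1}"
    using assms(1) by (intro finite_measure_mono) auto
  finally show ?thesis by (auto intro: less_imp_le)
qed

lemma ereal_le_elog2_iff:
  assumes "0 < y"
  shows "ereal R \<le> elog2 y \<longleftrightarrow> ereal (2 powr R) \<le> y"
  using assms by (cases y) (simp_all add: le_log_iff elog2.simps(2)[folded infinity_ereal_def])

definition outage_rates :: "'a measure \<Rightarrow> ('a \<Rightarrow> real) \<Rightarrow> real \<Rightarrow> real \<Rightarrow> real set" where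
  "outage_rates M S \<rho> \<epsilon> = {R. 0 \<le> R \<and> measure M {\<omega>\<in>space M. S \<omega> < (2 powr R - 1) / \<rho>} < \<epsilon>}"

lemma outage_capacity_eq_Sup_outage_rates:
  "outage_capacity M h n \<rho> \<epsilon> = Sup (outage_rates M (\<lambda>\<omega>. \<Sum>i<n. (cmod (h i \<omega>))\<^sup>2) \<rho> \<epsilon>)"
  by (simp add: outage_capacity_def outage_rates_def)

lemma zero_in_outage_rates:
  assumes "\<And>\<omega>. \<omega> \<in> space M \<Longrightarrow> 0 \<le> S \<omega>" and "0 < \<epsilon>"
  shows "0 \<in> outage_rates M S \<rho> \<epsilon>"
proof -
  have "{\<omega>\<in>space M. S \<omega> < 0} = {}" using assms(1) by (auto simp: not_less)
  then have "measure M {\<omega>\<in>space M. S \<omega> < 0} = 0" by (simp only: measure_empty)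
  then show ?thesis using assms(2) by (simp add: outage_rates_def)
qed

lemma (in prob_space) bdd_above_outage_rates:
  assumes "S \<in> borel_measurable M" and "0 < \<rho>" and "\<epsilon> < 1"
  shows "bdd_above (outage_rates M S \<rho> \<epsilon>)"
proof -
  obtain t where t: "\<epsilon> \<le> prob {\<omega>\<in>space M. S \<omega> < t}"
    using ex_prob_less_ge[OF assms(1,3)] by blast
  have "R \<le> log 2 (1 + \<rho> * \<bar>t\<bar>)" if R: "R \<in> outage_rates M S \<rho> \<epsilon>" for R
  proof -
    have "(2 powr R - 1) / \<rho> < t"
    proof (rule ccontr)
      assume "\<not> (2 powr R - 1) / \<rho> < t"
      then have "prob {\<omega>\<in>space M. S \<omega> < t} \<le> prob {\<omega>\<in>space M. S \<omega> < (2 powr R - 1) / \<rho>}"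
        using assms(1) by (intro finite_measure_mono) auto
      with t R show False by (simp add: outage_rates_def)
    qed
    then have "2 powr R < 1 + \<rho> * t" using assms(2) by (simp add: field_simps)
    also have "\<dots> \<le> 1 + \<rho> * \<bar>t\<bar>" using assms(2) by simp
    finally show ?thesis using assms(2) by (simp add: le_log_iff add_pos_nonneg)
  qed
  then show ?thesis by (rule bdd_aboveI)
qed

lemma Sup_outage_rates_le_elog2:
  assumes S: "\<And>\<omega>. \<omega> \<in> space M \<Longrightarrow> 0 \<le> S \<omega>" and "0 < \<rho>" "0 < \<epsilon>"
    and U: "\<And>t. measure M {\<omega>\<in>space M. S \<omega> < t} < \<epsilon> \<Longrightarrow> ereal t \<le> U"
  shows "ereal (Sup (outage_rates M S \<rho> \<epsilon>)) \<le> elog2 (1 + ereal \<rho> * U)"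
proof -
  let ?A = "outage_rates M S \<rho> \<epsilon>"
  have R_le: "ereal R \<le> elog2 (1 + ereal \<rho> * U)" if "R \<in> ?A" for R
  proof -
    define t where "t = (2 powr R - 1) / \<rho>"
    have "ereal (2 powr R) = 1 + ereal \<rho> * ereal t"
      using \<open>0 < \<rho>\<close> by (simp add: t_def)
    also have "\<dots> \<le> 1 + ereal \<rho> * U"
      using U[of t] that \<open>0 < \<rho>\<close> by (intro add_left_mono ereal_mult_left_mono) (auto simp: outage_rates_def t_def)
    finally have "ereal (2 powr R) \<le> 1 + ereal \<rho> * U" .
    moreover from this have "0 < 1 + ereal \<rho> * U" by (rule less_le_trans[rotated]) simp
    ultimately show ?thesis by (simp add: ereal_le_elog2_iff)
  qed
  have "0 \<in> ?A" by (rule zero_in_outage_rates[OF S \<open>0 < \<epsilon>\<close>])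
  show ?thesis
  proof (cases "elog2 (1 + ereal \<rho> * U)")
    case (real r)
    have "Sup ?A \<le> r"
      using R_le \<open>0 \<in> ?A\<close> by (intro cSup_least) (auto simp: real)
    then show ?thesis by (simp add: real)
  next
    case MInf
    then show ?thesis using R_le[OF \<open>0 \<in> ?A\<close>] by simp
  qed simp
qed

lemma (in prob_space) elog2_le_Sup_outage_rates:
  assumes S: "S \<in> borel_measurable M" "\<And>\<omega>. \<omega> \<in> space M \<Longrightarrow> 0 \<le> S \<omega>"
    and "0 < \<rho>" "0 < \<epsilon>" "\<epsilon> < 1"
    and "0 \<le> L" and L: "\<And>t. \<epsilon> \<le> prob {\<omega>\<in>space M. S \<omega> < t} \<Longrightarrow> L \<le> ereal t"
  shows "elog2 (1 + ereal \<rho> * L) \<le> ereal (Sup (outage_rates M S \<rho> \<epsilon>))"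
proof -
  let ?A = "outage_rates M S \<rho> \<epsilon>"
  obtain t where "\<epsilon> \<le> prob {\<omega>\<in>space M. S \<omega> < t}"
    using ex_prob_less_ge[OF S(1) \<open>\<epsilon> < 1\<close>] by blast
  with L \<open>0 \<le> L\<close> obtain l where l: "L = ereal l" "0 \<le> l" by (cases L) auto
  define c where "c = log 2 (1 + \<rho> * l)"
  have "0 < 1 + \<rho> * l" using \<open>0 < \<rho>\<close> l(2) by (simp add: add_pos_nonneg)
  have rate_mem: "R \<in> ?A" if "0 \<le> R" "R < c" for R
  proof -
    have "2 powr R < 1 + \<rho> * l"
      using that \<open>0 < 1 + \<rho> * l\<close> by (simp add: c_def less_log_iff[symmetric])
    then have "(2 powr R - 1) / \<rho> < l" using \<open>0 < \<rho>\<close> by (simp add: field_simps)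
    then have "\<not> \<epsilon> \<le> prob {\<omega>\<in>space M. S \<omega> < (2 powr R - 1) / \<rho>}" using L l(1) by force
    with \<open>0 \<le> R\<close> show ?thesis by (simp add: outage_rates_def)
  qed
  have bdd: "bdd_above ?A" by (rule bdd_above_outage_rates[OF S(1) \<open>0 < \<rho>\<close> \<open>\<epsilon> < 1\<close>])
  have "0 \<in> ?A" by (rule zero_in_outage_rates[OF S(2) \<open>0 < \<epsilon>\<close>])
  have "c \<le> Sup ?A"
  proof (cases "0 < c")
    case True
    show ?thesis
    proof (rule dense_le_bounded[OF True])
      fix R assume "0 < R" "R < c"
      then show "R \<le> Sup ?A" using rate_mem bdd by (intro cSup_upper) auto
    qed
  next
    case False
    then show ?thesis using cSup_upper[OF \<open>0 \<in> ?A\<close> bdd] by simp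
  qed
  then show ?thesis by (simp add: l(1) c_def add.commute)
qed

theorem (in prob_space) Sup_outage_rates_bounds:
  fixes X :: "'i \<Rightarrow> 'a \<Rightarrow> real"
  assumes I: "finite I" "I \<noteq> {}"
    and X: "\<And>i. i \<in> I \<Longrightarrow> X i \<in> borel_measurable M"
    and nonneg: "\<And>i \<omega>. i \<in> I \<Longrightarrow> \<omega> \<in> space M \<Longrightarrow> 0 \<le> X i \<omega>"
    and cont: "\<And>i. i \<in> I \<Longrightarrow> continuous_distribution (distr M borel (X i))"
    and "0 < \<rho>" "0 < \<epsilon>" "\<epsilon> < 1"
  defines "g i \<equiv> quantile (distr M borel (X i)) \<epsilon>"
  shows "elog2 (1 - ereal \<rho> * (\<Sum>i\<in>I. cond_exp_ge (distr M borel (\<lambda>\<omega>. - X i \<omega>)) (- g i)))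
      \<le> ereal (Sup (outage_rates M (\<lambda>\<omega>. \<Sum>i\<in>I. X i \<omega>) \<rho> \<epsilon>))"
    and "ereal (Sup (outage_rates M (\<lambda>\<omega>. \<Sum>i\<in>I. X i \<omega>) \<rho> \<epsilon>))
      \<le> elog2 (1 + ereal \<rho> * (\<Sum>i\<in>I. cond_exp_ge (distr M borel (X i)) (g i)))"
proof -
  define S where "S \<omega> = (\<Sum>i\<in>I. X i \<omega>)" for \<omega>
  have "S \<in> borel_measurable M" unfolding S_def using X by (rule borel_measurable_sum)
  moreover have "0 \<le> S \<omega>" if "\<omega> \<in> space M" for \<omega>
    unfolding S_def using nonneg that by (intro sum_nonneg)
  ultimately have S: "S \<in> borel_measurable M" "\<And>\<omega>. \<omega> \<in> space M \<Longrightarrow> 0 \<le> S \<omega>" by auto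
  have tails: "prob {\<omega>\<in>space M. X i \<omega> \<le> g i} = \<epsilon>" "prob {\<omega>\<in>space M. g i \<le> X i \<omega>} = 1 - \<epsilon>"
    if "i \<in> I" for i
    using prob_quantile_tails[OF X[OF that] cont[OF that] \<open>0 < \<epsilon>\<close> \<open>\<epsilon> < 1\<close>] by (simp_all add: g_def)
  let ?Phi_minus = "\<Sum>i\<in>I. cond_exp_ge (distr M borel (\<lambda>\<omega>. - X i \<omega>)) (- g i)"
  have "- ?Phi_minus \<le> ereal t" if "\<epsilon> \<le> prob {\<omega>\<in>space M. S \<omega> < t}" for t
    using le_sum_cond_exp_ge_uminus[OF I X nonneg, where c = g and t = t] tails that \<open>0 < \<epsilon>\<close>
    by (simp add: S_def ereal_uminus_le_reorder)
  moreover have "?Phi_minus \<le> 0"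
    using X nonneg by (intro sum_nonpos cond_exp_ge_distr_nonpos) auto
  ultimately show "elog2 (1 - ereal \<rho> * ?Phi_minus) \<le> ereal (Sup (outage_rates M (\<lambda>\<omega>. \<Sum>i\<in>I. X i \<omega>) \<rho> \<epsilon>))"
    using elog2_le_Sup_outage_rates[OF S \<open>0 < \<rho>\<close> \<open>0 < \<epsilon>\<close> \<open>\<epsilon> < 1\<close>, of "- ?Phi_minus"]
    by (simp add: S_def[abs_def] minus_ereal_def)
  have "ereal t \<le> (\<Sum>i\<in>I. cond_exp_ge (distr M borel (X i)) (g i))"
    if "prob {\<omega>\<in>space M. S \<omega> < t} < \<epsilon>" for t
  proof -
    have "prob {\<omega>\<in>space M. t \<le> S \<omega>} = 1 - prob {\<omega>\<in>space M. S \<omega> < t}"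
      using S(1) by (subst prob_compl[symmetric]) (auto intro!: arg_cong[where f = prob])
    then show ?thesis
      using le_sum_cond_exp_ge_nonneg[OF I X nonneg, where c = g and t = t] tails that \<open>\<epsilon> < 1\<close>
      by (simp add: S_def)
  qed
  then show "ereal (Sup (outage_rates M (\<lambda>\<omega>. \<Sum>i\<in>I. X i \<omega>) \<rho> \<epsilon>))
      \<le> elog2 (1 + ereal \<rho> * (\<Sum>i\<in>I. cond_exp_ge (distr M borel (X i)) (g i)))"
    using Sup_outage_rates_le_elog2[where M = M and S = S, OF S(2) \<open>0 < \<rho>\<close> \<open>0 < \<epsilon>\<close>] by (simp add: S_def[abs_def])
qed

theorem theorem3:
  fixes n :: nat and \<rho> \<epsilon> :: real
    and F :: "nat \<Rightarrow> real measure"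
    and M :: "'a measure" and h :: "nat \<Rightarrow> 'a \<Rightarrow> complex"
  assumes "n \<ge> 2" and "\<rho> > 0" and "0 < \<epsilon>" and "\<epsilon> < 1"
    and "\<forall>i<n. continuous_distribution (F i)"
    and "\<forall>i<n. has_monotone_density (F i)"
    and "prob_space M"
    and "\<forall>i<n. h i \<in> borel_measurable M"
    and "\<forall>i<n. distr M borel (\<lambda>\<omega>. (cmod (h i \<omega>))\<^sup>2) = F i"
  shows "elog2 (1 - ereal \<rho> * Phi_minus n F (1 - \<epsilon>)) \<le> ereal (outage_capacity M h n \<rho> \<epsilon>)
       \<and> ereal (outage_capacity M h n \<rho> \<epsilon>) \<le> elog2 (1 + ereal \<rho> * Phi n F (\<lambda>i. quantile (F i)) \<epsilon>)"
proof -
  interpret prob_space M by fact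
  define X where "X i \<omega> = (cmod (h i \<omega>))\<^sup>2" for i \<omega>
  have X: "X i \<in> borel_measurable M" "F i = distr M borel (X i)" if "i < n" for i
    using assms(8,9) that unfolding X_def[abs_def] by auto
  have "Phi n F (\<lambda>i. quantile (F i)) \<epsilon>
      = (\<Sum>i<n. cond_exp_ge (distr M borel (X i)) (quantile (distr M borel (X i)) \<epsilon>))"
    unfolding Phi_def using X(2) by (intro sum.cong) auto
  moreover have "Phi_minus n F (1 - \<epsilon>)
      = (\<Sum>i<n. cond_exp_ge (distr M borel (\<lambda>\<omega>. - X i \<omega>)) (- quantile (distr M borel (X i)) \<epsilon>))"
    unfolding Phi_minus_def Phi_def using X by (intro sum.cong) (auto simp: distr_distr comp_def)
  moreover have "outage_capacity M h n \<rho> \<epsilon> = Sup (outage_rates M (\<lambda>\<omega>. \<Sum>i<n. X i \<omega>) \<rho> \<epsilon>)"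
    by (simp add: outage_capacity_eq_Sup_outage_rates X_def)
  moreover note Sup_outage_rates_bounds[of "{..<n}" X, OF _ _ X(1)]
  ultimately show ?thesis
    using assms(1-5) X by (auto simp: X_def lessThan_empty_iff)
qed

end
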